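(* Let $a\in(0,1)$, $r\ge1$, $\theta\in\mathcal{D}_{a,r}$ and $X\sim N(\theta^*,\sigma^2I_d)$. Then $$\mathbb{E}\,\omega\Big(\frac{\langle\theta,X\rangle}{\sigma^2}\Big)>1-e^{-(as/r)^2/5}.$$
   Context: Fix $d\ge1$, $\sigma>0$ and $\theta^*\in\mathbb{R}^d\setminus\{0\}$. Let $\omega(t):=1/(1+e^{-2t})$ and $s:=\|\theta^*\|/\sigma$. For $a\in(0,1)$ and $r\ge1$ define $\mathcal{H}_a:=\{\theta:\langle\theta,\theta^*\rangle\ge a\|\theta^*\|^2\}$, $\mathcal{B}_r:=\{\theta:\|\theta\|\le r\|\theta^*\|\}$ and $\mathcal{D}_{a,r}:=\mathcal{H}_a\cap\mathcal{B}_r$. *)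

theory Defs
  imports "HOL-Probability.Probability"
begin

definition omega :: "real \<Rightarrow> real" where
  "omega t = 1 / (1 + exp (-2 * t))"

definition iso_gaussian_density :: "'a::euclidean_space \<Rightarrow> real \<Rightarrow> 'a \<Rightarrow> real" where
  "iso_gaussian_density mu sg x =
     exp (- (norm (x - mu))\<^sup>2 / (2 * sg\<^sup>2)) / (sqrt (2 * pi * sg\<^sup>2)) ^ DIM('a)"

definition halfspace_H :: "real \<Rightarrow> 'a::real_inner \<Rightarrow> 'a set" where
  "halfspace_H a thstar = {th. inner th thstar \<ge> a * (norm thstar)\<^sup>2}"

definition ball_B :: "real \<Rightarrow> 'a::real_normed_vector \<Rightarrow> 'a set" where
  "ball_B r thstar = {th. norm th \<le> r * norm thstar}"

definition region_D :: "real \<Rightarrow> real \<Rightarrow> 'a::real_inner \<Rightarrow> 'a set" where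
  "region_D a r thstar = halfspace_H a thstar \<inter> ball_B r thstar"

end

theory Submission
  imports Defs
begin

text \<open>
  Since \<open>1 - omega y = 1 / (1 + exp (2 y)) \<le> exp (- l y)\<close> for every \<open>l \<in> [0, 2]\<close>, the
  expectation is at least \<open>1 - E exp (- l \<langle>\<theta>, X\<rangle> / \<sigma>\<^sup>2)\<close>. Exponential tilting turns the
  Gaussian density into one with a shifted mean, whose normalisation follows from that of the
  law of \<open>X\<close> by translation invariance of Lebesgue measure; this gives the moment generating
  function \<open>exp (- l \<mu> + l\<^sup>2 v / 2)\<close> with \<open>\<mu> = \<langle>\<theta>, \<theta>*\<rangle> / \<sigma>\<^sup>2 \<ge> a s\<^sup>2\<close> and
  \<open>v = \<parallel>\<theta>\<parallel>\<^sup>2 / \<sigma>\<^sup>2 \<le> r\<^sup>2 s\<^sup>2\<close>. The choice \<open>l = min 2 (\<mu> / v)\<close> pushes the exponent below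
  \<open>- (a s / r)\<^sup>2 / 5\<close>.
\<close>

lemma omega_nonneg: "0 \<le> omega t"
  unfolding omega_def by (simp add: add_pos_pos)

lemma omega_le_one: "omega t \<le> 1"
  unfolding omega_def by (simp add: add_pos_pos)

lemma borel_measurable_omega [measurable]: "omega \<in> borel_measurable borel"
  unfolding omega_def by measurable

lemma one_minus_exp_le_omega:
  assumes "0 \<le> l" "l \<le> 2"
  shows "1 - exp (- l * t) \<le> omega t"
proof -
  have denom_pos: "0 < 1 + exp (2 * t)"
    by (simp add: add_pos_pos)
  have exp_neg: "exp (- 2 * t) = 1 / exp (2 * t)"
    by (simp add: exp_minus inverse_eq_divide)
  have "1 - omega t = 1 / (1 + exp (2 * t))"
    using denom_pos unfolding omega_def exp_neg by (simp add: field_simps)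
  also have "\<dots> \<le> exp (- l * t)"
  proof (cases "t \<le> 0")
    case True
    have "1 / (1 + exp (2 * t)) \<le> 1" using denom_pos by simp
    also have "1 \<le> exp (- l * t)" using True assms by (simp add: mult_nonneg_nonpos)
    finally show ?thesis .
  next
    case False
    have "1 / (1 + exp (2 * t)) \<le> 1 / exp (2 * t)"
      by (intro divide_left_mono) (auto intro!: mult_pos_pos denom_pos)
    also have "\<dots> = exp (- 2 * t)" by (simp add: exp_minus field_simps)
    also have "\<dots> \<le> exp (- l * t)" using False assms by (simp add: mult_right_mono)
    finally show ?thesis .
  qed
  finally show ?thesis by linarith
qed

lemma iso_gaussian_density_nonneg: "0 \<le> iso_gaussian_density mu sg x"
  unfolding iso_gaussian_density_def by simp

lemma borel_measurable_iso_gaussian_density [measurable]: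
  "iso_gaussian_density mu sg \<in> borel_measurable (borel :: 'a::euclidean_space measure)"
  unfolding iso_gaussian_density_def by measurable

lemma iso_gaussian_density_translate:
  "iso_gaussian_density mu sg (b + x) = iso_gaussian_density (mu - b) sg x"
  unfolding iso_gaussian_density_def by (simp add: algebra_simps)

lemma iso_gaussian_density_exp_tilt:
  fixes mu u x :: "'a::euclidean_space"
  assumes "sg \<noteq> 0"
  shows "exp (inner u x) * iso_gaussian_density mu sg x =
    exp (inner u mu + sg\<^sup>2 * (norm u)\<^sup>2 / 2) * iso_gaussian_density (mu + sg\<^sup>2 *\<^sub>R u) sg x"
proof -
  have norm_shift: "(norm (x - (mu + sg\<^sup>2 *\<^sub>R u)))\<^sup>2 =
      (norm (x - mu))\<^sup>2 - 2 * sg\<^sup>2 * inner u (x - mu) + sg\<^sup>2 * sg\<^sup>2 * (norm u)\<^sup>2"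
    unfolding power2_norm_eq_inner
    by (simp add: inner_diff_left inner_diff_right inner_add_left inner_add_right inner_commute algebra_simps)
  have "inner u x + - (norm (x - mu))\<^sup>2 / (2 * sg\<^sup>2) =
      (inner u mu + sg\<^sup>2 * (norm u)\<^sup>2 / 2) + - (norm (x - (mu + sg\<^sup>2 *\<^sub>R u)))\<^sup>2 / (2 * sg\<^sup>2)"
    unfolding norm_shift using assms by (simp add: field_simps inner_diff_right)
  then have "exp (inner u x) * exp (- (norm (x - mu))\<^sup>2 / (2 * sg\<^sup>2)) =
      exp (inner u mu + sg\<^sup>2 * (norm u)\<^sup>2 / 2) * exp (- (norm (x - (mu + sg\<^sup>2 *\<^sub>R u)))\<^sup>2 / (2 * sg\<^sup>2))"
    by (simp only: mult_exp_exp)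
  then show ?thesis
    unfolding iso_gaussian_density_def by (metis times_divide_eq_right)
qed

lemma lborel_integral_translate:
  fixes f :: "'a::euclidean_space \<Rightarrow> real" and b :: 'a
  assumes [measurable]: "f \<in> borel_measurable borel"
  shows "integrable lborel (\<lambda>x. f (b + x)) \<longleftrightarrow> integrable lborel f"
    and "(\<integral>x. f (b + x) \<partial>lborel) = integral\<^sup>L lborel f"
proof -
  show "integrable lborel (\<lambda>x. f (b + x)) \<longleftrightarrow> integrable lborel f"
    using integrable_distr_eq[of "(+) b" lborel borel f] by (simp add: lborel_distr_plus)
  show "(\<integral>x. f (b + x) \<partial>lborel) = integral\<^sup>L lborel f"
    using integral_distr[of "(+) b" lborel borel f] by (simp add: lborel_distr_plus)
qed

lemma distributed_density_normalized:
  assumes "prob_space M" "distributed M lborel X (\<lambda>x. ennreal (f x))" "\<And>x. 0 \<le> f x"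
  shows "integrable lborel f" "integral\<^sup>L lborel f = 1"
proof -
  interpret prob_space M by fact
  show "integrable lborel f"
    using distributed_integrable[OF assms(2), of "\<lambda>_. 1"] assms(3) by simp
  show "integral\<^sup>L lborel f = 1"
    using distributed_integral[OF assms(2), of "\<lambda>_. 1"] assms(3) by (simp add: prob_space)
qed

lemma iso_gaussian_density_normalized_translate:
  fixes mu nu :: "'a::euclidean_space"
  assumes "integrable lborel (iso_gaussian_density mu sg)"
    and "integral\<^sup>L lborel (iso_gaussian_density mu sg) = 1"
  shows "integrable lborel (iso_gaussian_density nu sg)"
    and "integral\<^sup>L lborel (iso_gaussian_density nu sg) = 1"
proof -
  have shift: "iso_gaussian_density nu sg = (\<lambda>x. iso_gaussian_density mu sg ((mu - nu) + x))"
    by (simp add: iso_gaussian_density_translate)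
  show "integrable lborel (iso_gaussian_density nu sg)"
    unfolding shift using assms(1) by (simp add: lborel_integral_translate)
  show "integral\<^sup>L lborel (iso_gaussian_density nu sg) = 1"
    unfolding shift using assms(2) by (simp add: lborel_integral_translate)
qed

lemma iso_gaussian_exp_inner_integral:
  fixes mu u :: "'a::euclidean_space"
  assumes "sg \<noteq> 0"
    and "integrable lborel (iso_gaussian_density mu sg)"
    and "integral\<^sup>L lborel (iso_gaussian_density mu sg) = 1"
  shows "integrable lborel (\<lambda>x. exp (inner u x) * iso_gaussian_density mu sg x)"
    and "(\<integral>x. exp (inner u x) * iso_gaussian_density mu sg x \<partial>lborel) =
           exp (inner u mu + sg\<^sup>2 * (norm u)\<^sup>2 / 2)"
  using iso_gaussian_density_normalized_translate [OF assms(2,3), of "mu + sg\<^sup>2 *\<^sub>R u"]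
  by (simp_all add: iso_gaussian_density_exp_tilt [OF assms(1)])

lemma expectation_omega_ge_one_minus_exp:
  fixes mu theta :: "'a::euclidean_space"
  assumes "prob_space M"
    and X: "distributed M lborel X (\<lambda>x. ennreal (iso_gaussian_density mu sg x))"
    and "sg \<noteq> 0" "0 \<le> l" "l \<le> 2"
  shows "1 - exp (- l * (inner theta mu / sg\<^sup>2) + l\<^sup>2 * ((norm theta)\<^sup>2 / sg\<^sup>2) / 2)
           \<le> prob_space.expectation M (\<lambda>w. omega (inner theta (X w) / sg\<^sup>2))"
proof -
  define g where "g = iso_gaussian_density mu sg"
  define u where "u = - (l / sg\<^sup>2) *\<^sub>R theta"
  have g_nonneg: "0 \<le> g x" for x
    by (simp add: g_def iso_gaussian_density_nonneg)
  have g_int: "integrable lborel g" and g_int_1: "integral\<^sup>L lborel g = 1"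
    using distributed_density_normalized [OF assms(1) X] g_nonneg by (simp_all add: g_def)
  have inner_u: "inner u x = - l * (inner theta x / sg\<^sup>2)" for x
    by (simp add: u_def)
  have "sg\<^sup>2 * (norm u)\<^sup>2 / 2 = l\<^sup>2 * ((norm theta)\<^sup>2 / sg\<^sup>2) / 2"
    using assms(3) by (simp add: u_def power_mult_distrib power_divide field_simps)
  then have mgf_int: "integrable lborel (\<lambda>x. exp (- l * (inner theta x / sg\<^sup>2)) * g x)"
    and mgf: "(\<integral>x. exp (- l * (inner theta x / sg\<^sup>2)) * g x \<partial>lborel) =
        exp (- l * (inner theta mu / sg\<^sup>2) + l\<^sup>2 * ((norm theta)\<^sup>2 / sg\<^sup>2) / 2)"
    using iso_gaussian_exp_inner_integral [OF assms(3) g_int [unfolded g_def] g_int_1 [unfolded g_def], of u]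
    by (simp_all add: inner_u g_def)
  have omega_int: "integrable lborel (\<lambda>x. g x * omega (inner theta x / sg\<^sup>2))"
  proof (rule Bochner_Integration.integrable_bound [OF g_int])
    show "AE x in lborel. norm (g x * omega (inner theta x / sg\<^sup>2)) \<le> norm (g x)"
      using g_nonneg by (simp add: abs_mult omega_nonneg omega_le_one mult_left_le)
  qed (simp add: g_def)
  have "1 - exp (- l * (inner theta mu / sg\<^sup>2) + l\<^sup>2 * ((norm theta)\<^sup>2 / sg\<^sup>2) / 2) =
      integral\<^sup>L lborel g - (\<integral>x. exp (- l * (inner theta x / sg\<^sup>2)) * g x \<partial>lborel)"
    by (simp only: g_int_1 mgf)
  also have "\<dots> = (\<integral>x. g x - exp (- l * (inner theta x / sg\<^sup>2)) * g x \<partial>lborel)"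
    by (rule Bochner_Integration.integral_diff [OF g_int mgf_int, symmetric])
  also have "\<dots> = (\<integral>x. g x * (1 - exp (- l * (inner theta x / sg\<^sup>2))) \<partial>lborel)"
    by (simp add: algebra_simps)
  also have "\<dots> \<le> (\<integral>x. g x * omega (inner theta x / sg\<^sup>2) \<partial>lborel)"
    using g_int mgf_int omega_int g_nonneg assms(4,5)
    by (intro integral_mono mult_left_mono one_minus_exp_le_omega)
      (auto simp: right_diff_distrib mult.commute)
  also have "\<dots> = prob_space.expectation M (\<lambda>w. omega (inner theta (X w) / sg\<^sup>2))"
    unfolding g_def by (rule distributed_integral [OF X]) (simp_all add: iso_gaussian_density_nonneg)
  finally show ?thesis .
qed

lemma gaussian_tilt_exponent_bound:
  fixes a r s mu v :: real
  assumes "0 < a" "a < 1" "1 \<le> r" "0 < s"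
    and mu: "a * s\<^sup>2 \<le> mu" and v: "0 \<le> v" "v \<le> r\<^sup>2 * s\<^sup>2"
  shows "\<exists>l. 0 \<le> l \<and> l \<le> 2 \<and> - l * mu + l\<^sup>2 * v / 2 < - ((a * s / r)\<^sup>2) / 5"
proof -
  define t where "t = (a * s / r)\<^sup>2"
  have t_pos: "0 < t"
    using assms(1,3,4) by (simp add: t_def)
  have mu_pos: "0 < mu"
    using assms(1,4) mu by (smt (verit) mult_pos_pos zero_less_power)
  have "\<exists>l. 0 \<le> l \<and> l \<le> 2 \<and> - l * mu + l\<^sup>2 * v / 2 < - t / 5"
  proof (cases "mu \<le> 2 * v")
    case True
    then have v_pos: "0 < v" using mu_pos by linarith
    have "t * v \<le> t * (r\<^sup>2 * s\<^sup>2)"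
      using v t_pos by (intro mult_left_mono) auto
    also have "\<dots> = (a * s\<^sup>2)\<^sup>2"
      using assms(3) by (simp add: t_def field_simps power2_eq_square)
    also have "\<dots> \<le> mu\<^sup>2"
      using mu assms(1) by (intro power_mono) auto
    finally have "t \<le> mu\<^sup>2 / v"
      using v_pos by (simp add: le_divide_eq)
    have "- (mu / v) * mu + (mu / v)\<^sup>2 * v / 2 = - (mu\<^sup>2 / v) / 2"
      using v_pos by (simp add: field_simps power2_eq_square)
    also have "\<dots> \<le> - t / 2"
      using \<open>t \<le> mu\<^sup>2 / v\<close> by simp
    also have "\<dots> < - t / 5"
      using t_pos by simp
    finally have "- (mu / v) * mu + (mu / v)\<^sup>2 * v / 2 < - t / 5" .
    moreover have "0 \<le> mu / v" "mu / v \<le> 2"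
      using True mu_pos v_pos by (simp_all add: divide_le_eq)
    ultimately show ?thesis by blast
  next
    case False
    have "a / r\<^sup>2 \<le> 1"
      using assms(2,3) by (smt (verit) le_divide_eq_1 one_le_power)
    then have "a * (a / r\<^sup>2) * s\<^sup>2 \<le> a * 1 * s\<^sup>2"
      using assms(1) by (intro mult_right_mono mult_left_mono) auto
    then have "t \<le> a * s\<^sup>2"
      by (simp add: t_def power_divide power_mult_distrib power2_eq_square mult_ac)
    then show ?thesis
      using False mu t_pos by (intro exI [of _ 2]) auto
  qed
  then show ?thesis
    by (simp only: t_def)
qed

theorem mainTheorem13:
  fixes thstar theta :: "'a::euclidean_space"
    and sg a r :: real
    and M :: "'b measure" and X :: "'b \<Rightarrow> 'a"
  assumes "sg > 0" and "thstar \<noteq> 0"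
    and "0 < a" and "a < 1" and "r \<ge> 1"
    and "theta \<in> region_D a r thstar"
    and "prob_space M"
    and "distributed M lborel X (\<lambda>x. ennreal (iso_gaussian_density thstar sg x))"
  shows "prob_space.expectation M (\<lambda>w. omega (inner theta (X w) / sg\<^sup>2))
           > 1 - exp (- ((a * (norm thstar / sg) / r)\<^sup>2) / 5)"
proof -
  have inner_ge: "inner theta thstar \<ge> a * (norm thstar)\<^sup>2"
    and norm_le: "norm theta \<le> r * norm thstar"
    using assms(6) by (auto simp: region_D_def halfspace_H_def ball_B_def)
  have s_pos: "0 < norm thstar / sg"
    using assms(1,2) by simp
  have mu_ge: "a * (norm thstar / sg)\<^sup>2 \<le> inner theta thstar / sg\<^sup>2"
    using inner_ge assms(1) by (simp add: power_divide divide_right_mono)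
  have "(norm theta)\<^sup>2 \<le> (r * norm thstar)\<^sup>2"
    using norm_le by (simp add: power_mono)
  then have v_le: "(norm theta)\<^sup>2 / sg\<^sup>2 \<le> r\<^sup>2 * (norm thstar / sg)\<^sup>2"
    by (simp add: power_divide power_mult_distrib divide_right_mono)
  obtain l where "0 \<le> l" "l \<le> 2" and exponent:
    "- l * (inner theta thstar / sg\<^sup>2) + l\<^sup>2 * ((norm theta)\<^sup>2 / sg\<^sup>2) / 2
       < - ((a * (norm thstar / sg) / r)\<^sup>2) / 5"
    using gaussian_tilt_exponent_bound [OF assms(3-5) s_pos mu_ge _ v_le] by auto
  have "1 - exp (- ((a * (norm thstar / sg) / r)\<^sup>2) / 5)
      < 1 - exp (- l * (inner theta thstar / sg\<^sup>2) + l\<^sup>2 * ((norm theta)\<^sup>2 / sg\<^sup>2) / 2)"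
    using exponent by simp
  also have "\<dots> \<le> prob_space.expectation M (\<lambda>w. omega (inner theta (X w) / sg\<^sup>2))"
    using expectation_omega_ge_one_minus_exp [OF assms(7,8)] assms(1) \<open>0 \<le> l\<close> \<open>l \<le> 2\<close> by simp
  finally show ?thesis .
qed

end
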